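(* Let $h(n)$ be the maximum size of a peak-pit Condorcet domain on $n$ alternatives and $f(n)$ the maximum size of a Condorcet domain on $n$ alternatives. Then there is a constant $C>0$ such that $f(n)\ge h(n)\ge C\left(\sqrt{2+2\sqrt2}\right)^n$ for all sufficiently large $n$; in particular $h(n)>2.1973^n$ for all sufficiently large $n$.
   Context: A domain is a set of linear orders on $[n]$. A Condorcet domain is a domain $D$ such that for every profile with an odd number of voters whose preferences all lie in $D$, the pairwise majority relation is transitive. For a triple $a<b<c$ of alternatives, call them the 1st, 2nd, 3rd; the never condition $xNp$ says the $x$-th alternative is never in position $p$ within the triple in any order of the domain. A domain is peak-pit if for every triple its restriction satisfies a never condition of the form $xN3$ or $xN1$. *)

theory Defs
  imports Complex_Main
begin

text \<open>Alternatives are 1,...,n. A linear order on [n] is a list (most preferred first)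
containing every alternative exactly once.\<close>

definition is_linorder :: "nat \<Rightarrow> nat list \<Rightarrow> bool" where
  "is_linorder n L \<longleftrightarrow> distinct L \<and> set L = {1..n}"

definition prefers :: "nat list \<Rightarrow> nat \<Rightarrow> nat \<Rightarrow> bool" where
  "prefers L a b \<longleftrightarrow> (\<exists>i j. i < j \<and> j < length L \<and> L ! i = a \<and> L ! j = b)"

definition is_domain :: "nat \<Rightarrow> nat list set \<Rightarrow> bool" where
  "is_domain n D \<longleftrightarrow> D \<subseteq> {L. is_linorder n L}"

definition majority :: "nat list list \<Rightarrow> nat \<Rightarrow> nat \<Rightarrow> bool" where
  "majority P a b \<longleftrightarrow> 2 * length (filter (\<lambda>L. prefers L a b) P) > length P"

definition condorcet_domain :: "nat \<Rightarrow> nat list set \<Rightarrow> bool" where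
  "condorcet_domain n D \<longleftrightarrow> is_domain n D \<and>
     (\<forall>P. set P \<subseteq> D \<and> odd (length P) \<longrightarrow>
        (\<forall>a\<in>{1..n}. \<forall>b\<in>{1..n}. \<forall>c\<in>{1..n}.
            majority P a b \<and> majority P b c \<longrightarrow> majority P a c))"

definition pos_in_triple :: "nat list \<Rightarrow> nat \<Rightarrow> nat \<Rightarrow> nat \<Rightarrow> nat \<Rightarrow> nat" where
  "pos_in_triple L a b c e = 1 + card {y \<in> {a, b, c}. prefers L y e}"

text \<open>Never condition xNp for the triple a<b<c: the x-th alternative of [a,b,c] is never
in position p.\<close>
definition never_cond :: "nat list set \<Rightarrow> nat \<Rightarrow> nat \<Rightarrow> nat \<Rightarrow> nat \<Rightarrow> nat \<Rightarrow> bool" where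
  "never_cond D a b c x p \<longleftrightarrow> (\<forall>L\<in>D. pos_in_triple L a b c ([a, b, c] ! (x - 1)) \<noteq> p)"

definition peak_pit :: "nat \<Rightarrow> nat list set \<Rightarrow> bool" where
  "peak_pit n D \<longleftrightarrow> (\<forall>a b c. 1 \<le> a \<and> a < b \<and> b < c \<and> c \<le> n \<longrightarrow>
      (\<exists>x\<in>{1,2,3}. never_cond D a b c x 3 \<or> never_cond D a b c x 1))"

definition f_max :: "nat \<Rightarrow> nat" where
  "f_max n = Max (card ` {D. condorcet_domain n D})"

definition h_max :: "nat \<Rightarrow> nat" where
  "h_max n = Max (card ` {D. condorcet_domain n D \<and> peak_pit n D})"

end

theory Submission
  imports Defs
begin

text \<open>
Number the alternatives from 0 and give each triple \<open>i < j < k\<close> the never condition 1N3 or 3N1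
according to a parity rule. The orders obeying all these conditions form a peak-pit domain, and
peak-pit domains are Condorcet: a majority cycle on a triple forces every alternative of the
triple to be ranked first by some voter and last by another.

A condition 1N3 only restricts the first alternative of its triple and 3N1 only the third, each
relative to the other two. Hence an order can be built from the top, and an alternative may be
appended to a prefix as soon as the conditions about it hold with respect to the set of
alternatives already placed. An automaton, whose states are special prefix sets, generates
such prefixes, and each of them extends to an order of the domain by appending the remaining
alternatives in increasing order. A weight on the states with \<open>11/5 \<cdot> w s \<le> \<Sum> w s'\<close> over
the moves \<open>s \<rightarrow> s'\<close> shows that there are at least \<open>(11/5)^l\<close> prefixes of length \<open>l\<close>, so the
domain on \<open>n\<close> alternatives has at least \<open>(11/5)^(n-14)\<close> orders, and
\<open>11/5 > 2.1974 > sqrt (2 + 2 sqrt 2)\<close>.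
\<close>

section \<open>Preferences and positions in a triple\<close>

lemma prefers_irrefl: "distinct L \<Longrightarrow> \<not> prefers L x x"
  unfolding prefers_def using nth_eq_iff_index_eq by fastforce

lemma prefers_asym:
  assumes "distinct L" and "prefers L x y"
  shows "\<not> prefers L y x"
proof
  assume "prefers L y x"
  then obtain i' j' where "i' < j'" "j' < length L" "L ! i' = y" "L ! j' = x"
    unfolding prefers_def by blast
  moreover obtain i j where "i < j" "j < length L" "L ! i = x" "L ! j = y"
    using assms(2) unfolding prefers_def by blast
  ultimately show False
    using assms(1) nth_eq_iff_index_eq[of L i j'] nth_eq_iff_index_eq[of L j i'] by simp
qed

lemma prefers_trans:
  assumes "distinct L" and "prefers L x y" and "prefers L y z"
  shows "prefers L x z"
proof -
  obtain i j where ij: "i < j" "j < length L" "L ! i = x" "L ! j = y"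
    using assms(2) unfolding prefers_def by blast
  obtain j' k where jk: "j' < k" "k < length L" "L ! j' = y" "L ! k = z"
    using assms(3) unfolding prefers_def by blast
  have "j = j'" using assms(1) ij jk nth_eq_iff_index_eq[of L j j'] by simp
  then show ?thesis unfolding prefers_def using ij jk by (intro exI[of _ i] exI[of _ k]) auto
qed

lemma prefers_total:
  assumes "x \<in> set L" "y \<in> set L" "x \<noteq> y"
  shows "prefers L x y \<or> prefers L y x"
proof -
  obtain i j where "i < length L" "L ! i = x" "j < length L" "L ! j = y"
    using assms(1,2) by (auto simp: in_set_conv_nth)
  moreover from this have "i \<noteq> j" using assms(3) by auto
  ultimately show ?thesis unfolding prefers_def by (metis linorder_neqE_nat)
qed

lemma prefers_nth_iff_in_take:
  assumes "distinct L" and "t < length L"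
  shows "prefers L x (L ! t) \<longleftrightarrow> x \<in> set (take t L)"
proof
  assume "prefers L x (L ! t)"
  then obtain i j where ij: "i < j" "j < length L" "L ! i = x" "L ! j = L ! t"
    unfolding prefers_def by blast
  have "j = t" using assms ij nth_eq_iff_index_eq[of L j t] by simp
  then show "x \<in> set (take t L)" using ij by (auto simp: in_set_conv_nth intro!: exI[of _ i])
next
  assume "x \<in> set (take t L)"
  then obtain i where "i < length (take t L)" "take t L ! i = x" by (auto simp: in_set_conv_nth)
  then show "prefers L x (L ! t)"
    using assms(2) unfolding prefers_def by (intro exI[of _ i] exI[of _ t]) auto
qed

lemma prefers_map_Suc: "prefers (map Suc L) (Suc x) (Suc y) \<longleftrightarrow> prefers L x y"
proof
  assume "prefers (map Suc L) (Suc x) (Suc y)"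
  then obtain i j where "i < j" "j < length L" "map Suc L ! i = Suc x" "map Suc L ! j = Suc y"
    unfolding prefers_def by auto
  then show "prefers L x y" unfolding prefers_def by (intro exI[of _ i] exI[of _ j]) auto
next
  assume "prefers L x y"
  then obtain i j where "i < j" "j < length L" "L ! i = x" "L ! j = y"
    unfolding prefers_def by auto
  then show "prefers (map Suc L) (Suc x) (Suc y)"
    unfolding prefers_def by (intro exI[of _ i] exI[of _ j]) auto
qed

lemma pos_in_triple_eq:
  assumes "distinct L" and "{a, b, c} = {e, u, v}"
  shows "pos_in_triple L a b c e = 1 + card {y \<in> {u, v}. prefers L y e}"
proof -
  have "{y \<in> {a, b, c}. prefers L y e} = {y \<in> {u, v}. prefers L y e}"
    unfolding assms(2) using prefers_irrefl[OF assms(1)] by auto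
  then show ?thesis unfolding pos_in_triple_def by (simp only:)
qed

lemma pos_in_triple_eq_3_iff:
  assumes "distinct L" and "{a, b, c} = {e, u, v}" and "u \<noteq> v"
  shows "pos_in_triple L a b c e = 3 \<longleftrightarrow> prefers L u e \<and> prefers L v e"
proof -
  have "{y \<in> {u, v}. prefers L y e} =
      (if prefers L u e then {u} else {}) \<union> (if prefers L v e then {v} else {})"
    by auto
  then show ?thesis
    unfolding pos_in_triple_eq[OF assms(1,2)] using assms(3) by auto
qed

lemma pos_in_triple_eq_1_iff:
  assumes "distinct L" and "{a, b, c} = {e, u, v}"
  shows "pos_in_triple L a b c e = 1 \<longleftrightarrow> \<not> prefers L u e \<and> \<not> prefers L v e"
  unfolding pos_in_triple_eq[OF assms] by auto

section \<open>Peak-pit domains are Condorcet domains\<close>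

lemma length_filter_mono:
  "(\<And>x. x \<in> set xs \<Longrightarrow> P x \<Longrightarrow> Q x) \<Longrightarrow> length (filter P xs) \<le> length (filter Q xs)"
  by (induction xs) auto

lemma length_filter_prefers_swap_le:
  assumes "\<forall>L\<in>set P. distinct L"
  shows "length (filter (\<lambda>L. prefers L u v) P) + length (filter (\<lambda>L. prefers L v u) P) \<le> length P"
proof -
  have "length (filter (\<lambda>L. prefers L v u) P) \<le> length (filter (\<lambda>L. \<not> prefers L u v) P)"
    using assms prefers_asym by (intro length_filter_mono) blast
  then show ?thesis using sum_length_filter_compl[of "\<lambda>L. prefers L u v" P] by linarith
qed

lemma not_majority_self: "\<forall>L\<in>set P. distinct L \<Longrightarrow> \<not> majority P u u"
  unfolding majority_def using prefers_irrefl by (simp add: filter_False)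

lemma majority_asym: "\<forall>L\<in>set P. distinct L \<Longrightarrow> majority P u v \<Longrightarrow> \<not> majority P v u"
  using length_filter_prefers_swap_le[of P u v] unfolding majority_def by linarith

lemma majority_complete:
  assumes "\<forall>L\<in>set P. u \<in> set L \<and> v \<in> set L" and "u \<noteq> v" and "odd (length P)"
    and "\<not> majority P u v"
  shows "majority P v u"
proof -
  have "length (filter (\<lambda>L. \<not> prefers L u v) P) \<le> length (filter (\<lambda>L. prefers L v u) P)"
    using assms(1,2) prefers_total by (intro length_filter_mono) blast
  moreover have "2 * length (filter (\<lambda>L. prefers L u v) P) \<noteq> length P"
    using assms(3) by (metis dvd_triv_left)
  ultimately show ?thesis
    using assms(4) sum_length_filter_compl[of "\<lambda>L. prefers L u v" P] unfolding majority_def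
    by linarith
qed

lemma majority_cycle_has_bottom:
  assumes orders: "\<forall>L\<in>set P. distinct L \<and> {x, y, z} \<subseteq> set L" and "x \<noteq> y"
    and "majority P y z" and "majority P z x"
  shows "\<exists>L\<in>set P. prefers L y x \<and> prefers L z x"
proof (rule ccontr)
  assume "\<not> ?thesis"
  then have "length (filter (\<lambda>L. prefers L z x) P) \<le> length (filter (\<lambda>L. prefers L z y) P)"
    using orders assms(2) prefers_total prefers_trans
    by (intro length_filter_mono) (metis insert_subset)
  then show False
    using assms(3,4) length_filter_prefers_swap_le[of P y z] orders unfolding majority_def
    by auto
qed

lemma majority_cycle_has_top:
  assumes orders: "\<forall>L\<in>set P. distinct L \<and> {x, y, z} \<subseteq> set L" and "x \<noteq> z"
    and "majority P x y" and "majority P y z"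
  shows "\<exists>L\<in>set P. prefers L x y \<and> prefers L x z"
proof (rule ccontr)
  assume "\<not> ?thesis"
  then have "length (filter (\<lambda>L. prefers L x y) P) \<le> length (filter (\<lambda>L. prefers L z y) P)"
    using orders assms(2) prefers_total prefers_trans
    by (intro length_filter_mono) (metis insert_subset)
  then show False
    using assms(3,4) length_filter_prefers_swap_le[of P y z] orders unfolding majority_def
    by auto
qed

lemma majority_cycle_positions:
  assumes orders: "\<forall>L\<in>set P. distinct L \<and> {x, y, z} \<subseteq> set L" and "distinct [x, y, z]"
    and "majority P x y" "majority P y z" "majority P z x" and "{a, b, c} = {x, y, z}"
    and "e \<in> {x, y, z}" and "q \<in> {1, 3}"
  shows "\<exists>L\<in>set P. pos_in_triple L a b c e = q"
proof -
  have first: "\<exists>L\<in>set P. pos_in_triple L a b c u = q"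
    if orders: "\<forall>L\<in>set P. distinct L \<and> {u, v, w} \<subseteq> set L" and distinct: "distinct [u, v, w]"
      and uv: "majority P u v" and vw: "majority P v w" and wu: "majority P w u"
      and abc: "{a, b, c} = {u, v, w}"
    for u v w
  proof -
    obtain L where "L \<in> set P" "prefers L v u" "prefers L w u"
      using majority_cycle_has_bottom[OF orders _ vw wu] distinct by auto
    then have "\<exists>L\<in>set P. pos_in_triple L a b c u = 3"
      using pos_in_triple_eq_3_iff[of L a b c u v w] orders distinct abc by auto
    moreover obtain L where "L \<in> set P" "prefers L u v" "prefers L u w"
      using majority_cycle_has_top[OF orders _ uv vw] distinct by auto
    then have "\<exists>L\<in>set P. pos_in_triple L a b c u = 1"
      using pos_in_triple_eq_1_iff[of L a b c u v w] orders abc prefers_asym by blast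
    ultimately show ?thesis using \<open>q \<in> {1, 3}\<close> by blast
  qed
  have "{x, y, z} = {y, z, x}" "{x, y, z} = {z, x, y}" by auto
  with assms first[of x y z] first[of y z x] first[of z x y] show ?thesis by auto
qed

lemma sorted_triple_exists:
  fixes a b c :: nat
  assumes "distinct [a, b, c]"
  shows "\<exists>a' b' c'. a' < b' \<and> b' < c' \<and> {a', b', c'} = {a, b, c}"
  using assms
  by (cases a b rule: linorder_cases; cases b c rule: linorder_cases;
      cases a c rule: linorder_cases) (auto simp: insert_commute)

lemma peak_pit_no_majority_cycle:
  assumes "peak_pit n D" and "set P \<subseteq> D"
    and orders: "\<forall>L\<in>set P. distinct L \<and> {x, y, z} \<subseteq> set L"
    and "{x, y, z} \<subseteq> {1..n}" and "distinct [x, y, z]"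
    and "majority P x y" "majority P y z" "majority P z x"
  shows False
proof -
  obtain a b c where sorted: "a < b" "b < c" and abc: "{a, b, c} = {x, y, z}"
    using sorted_triple_exists[OF assms(5)] by blast
  have "{a, b, c} \<subseteq> {1..n}" using abc assms(4) by simp
  then have "1 \<le> a \<and> a < b \<and> b < c \<and> c \<le> n" using sorted by simp
  then obtain i p where i: "i \<in> {1, 2, 3}" and p: "p \<in> {1, 3}" and never: "never_cond D a b c i p"
    using assms(1) unfolding peak_pit_def by blast
  have "[a, b, c] ! (i - 1) \<in> {x, y, z}" using i unfolding abc[symmetric] by auto
  then obtain L where "L \<in> set P" "pos_in_triple L a b c ([a, b, c] ! (i - 1)) = p"
    using majority_cycle_positions[OF orders assms(5-8) abc _ p] by blast
  then show False using never assms(2) unfolding never_cond_def by blast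
qed

lemma peak_pit_condorcet_domain:
  assumes "is_domain n D" and "peak_pit n D"
  shows "condorcet_domain n D"
  unfolding condorcet_domain_def
proof (intro conjI allI impI ballI)
  show "is_domain n D" by fact
next
  fix P a b c
  assume P: "set P \<subseteq> D \<and> odd (length P)" and abc: "a \<in> {1..n}" "b \<in> {1..n}" "c \<in> {1..n}"
    and ab_bc: "majority P a b \<and> majority P b c"
  have orders: "\<forall>L\<in>set P. distinct L \<and> {a, b, c} \<subseteq> set L"
    using P abc assms(1) unfolding is_domain_def is_linorder_def by auto
  show "majority P a c"
  proof (rule ccontr)
    assume "\<not> majority P a c"
    have "a \<noteq> b" "b \<noteq> c" using ab_bc orders not_majority_self by auto
    moreover have "a \<noteq> c" using ab_bc orders majority_asym by blast
    ultimately have "distinct [a, b, c]" by simp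
    moreover have "majority P c a"
      using majority_complete[OF _ \<open>a \<noteq> c\<close>] orders P \<open>\<not> majority P a c\<close> by simp
    ultimately show False
      using peak_pit_no_majority_cycle[OF assms(2) _ orders] P abc ab_bc by auto
  qed
qed

section \<open>The domain of an alternating never-condition scheme\<close>

definition scheme_1N3 :: "nat \<Rightarrow> nat \<Rightarrow> nat \<Rightarrow> bool" where
  "scheme_1N3 i j k \<longleftrightarrow> (if odd j then odd i \<or> even k else even i \<and> odd k)"

text \<open>The domain lives on \<open>1..n\<close>, the scheme on \<open>0..n-1\<close>.\<close>

definition scheme_domain :: "nat \<Rightarrow> nat list set" where
  "scheme_domain n = {L. is_linorder n L \<and> (\<forall>a b c. 1 \<le> a \<and> a < b \<and> b < c \<and> c \<le> n \<longrightarrow>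
      (if scheme_1N3 (a - 1) (b - 1) (c - 1) then never_cond {L} a b c 1 3
       else never_cond {L} a b c 3 1))}"

lemma scheme_domain_peak_pit: "peak_pit n (scheme_domain n)"
  unfolding peak_pit_def
proof (intro allI impI)
  fix a b c assume abc: "1 \<le> a \<and> a < b \<and> b < c \<and> c \<le> n"
  then have "\<forall>L\<in>scheme_domain n. if scheme_1N3 (a - 1) (b - 1) (c - 1)
      then never_cond {L} a b c 1 3 else never_cond {L} a b c 3 1"
    unfolding scheme_domain_def by blast
  then show "\<exists>x\<in>{1, 2, 3}.
      never_cond (scheme_domain n) a b c x 3 \<or> never_cond (scheme_domain n) a b c x 1"
    unfolding never_cond_def by (cases "scheme_1N3 (a - 1) (b - 1) (c - 1)") auto
qed

lemma scheme_domain_condorcet: "condorcet_domain n (scheme_domain n)"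
  by (rule peak_pit_condorcet_domain[OF _ scheme_domain_peak_pit])
    (auto simp: is_domain_def scheme_domain_def)

lemma finite_linorders: "finite {L. is_linorder n L}"
proof (rule finite_subset)
  show "{L. is_linorder n L} \<subseteq> {L. set L \<subseteq> {1..n} \<and> length L = n}"
    unfolding is_linorder_def using distinct_card by fastforce
qed (simp add: finite_lists_length_eq)

lemma finite_condorcet_domains: "finite {D. condorcet_domain n D}"
  by (rule finite_subset[of _ "Pow {L. is_linorder n L}"])
    (auto simp: condorcet_domain_def is_domain_def finite_linorders)

lemma card_scheme_domain_le_h_max: "card (scheme_domain n) \<le> h_max n"
  unfolding h_max_def
  using finite_condorcet_domains scheme_domain_condorcet scheme_domain_peak_pit
  by (intro Max_ge) auto

lemma h_max_le_f_max: "h_max n \<le> f_max n"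
  unfolding h_max_def f_max_def
  using finite_condorcet_domains scheme_domain_condorcet scheme_domain_peak_pit
  by (intro Max_mono) auto

definition admissible_after :: "nat set \<Rightarrow> nat \<Rightarrow> bool" where
  "admissible_after P e \<longleftrightarrow>
     (\<forall>i j. i < j \<longrightarrow> j < e \<longrightarrow> \<not> scheme_1N3 i j e \<longrightarrow> i \<in> P \<or> j \<in> P) \<and>
     (\<forall>j k. e < j \<longrightarrow> j < k \<longrightarrow> scheme_1N3 e j k \<longrightarrow> \<not> (j \<in> P \<and> k \<in> P))"

fun admissible_suffix :: "nat \<Rightarrow> nat set \<Rightarrow> nat list \<Rightarrow> bool" where
  "admissible_suffix n P [] \<longleftrightarrow> P = {..<n}"
| "admissible_suffix n P (e # L) \<longleftrightarrow>
     e < n \<and> e \<notin> P \<and> admissible_after P e \<and> admissible_suffix n (insert e P) L"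

lemma admissible_suffix_set:
  "admissible_suffix n P L \<Longrightarrow> distinct L \<and> set L \<inter> P = {} \<and> P \<union> set L = {..<n}"
  by (induction L arbitrary: P) auto

lemma admissible_suffix_nth:
  "admissible_suffix n P L \<Longrightarrow> t < length L \<Longrightarrow> admissible_after (P \<union> set (take t L)) (L ! t)"
proof (induction L arbitrary: P t)
  case (Cons e L)
  then show ?case using Cons.IH[of "insert e P" "t - 1"] by (cases t) auto
qed simp

lemma admissible_after_prefers:
  assumes "admissible_suffix n {} L" and "x \<in> set L"
  shows "admissible_after {y. prefers L y x} x"
proof -
  obtain t where t: "t < length L" "L ! t = x" using assms(2) by (auto simp: in_set_conv_nth)
  have "distinct L" using admissible_suffix_set[OF assms(1)] by simp
  then have "{y. prefers L y x} = set (take t L)" using prefers_nth_iff_in_take[of L t] t by auto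
  then show ?thesis using admissible_suffix_nth[OF assms(1) t(1)] t(2) by simp
qed

lemma admissible_order_scheme:
  assumes "admissible_suffix n {} L" and "i < j" "j < k" "k < n"
  shows "scheme_1N3 i j k \<Longrightarrow> \<not> (prefers L j i \<and> prefers L k i)"
    and "\<not> scheme_1N3 i j k \<Longrightarrow> prefers L i k \<or> prefers L j k"
proof -
  have "set L = {..<n}" using admissible_suffix_set[OF assms(1)] by simp
  then have "admissible_after {y. prefers L y i} i" "admissible_after {y. prefers L y k} k"
    using admissible_after_prefers[OF assms(1)] assms(2-4) by auto
  then show "scheme_1N3 i j k \<Longrightarrow> \<not> (prefers L j i \<and> prefers L k i)"
    and "\<not> scheme_1N3 i j k \<Longrightarrow> prefers L i k \<or> prefers L j k"
    using assms(2,3) unfolding admissible_after_def by blast+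
qed

lemma admissible_order_in_scheme_domain:
  assumes "admissible_suffix n {} L"
  shows "map Suc L \<in> scheme_domain n"
proof -
  have "distinct L" "set L = {..<n}" using admissible_suffix_set[OF assms] by auto
  then have distinct: "distinct (map Suc L)" and "is_linorder n (map Suc L)"
    unfolding is_linorder_def by (auto simp: distinct_map image_Suc_lessThan)
  moreover have "if scheme_1N3 (a - 1) (b - 1) (c - 1) then never_cond {map Suc L} a b c 1 3
      else never_cond {map Suc L} a b c 3 1"
    if "1 \<le> a" "a < b" "b < c" "c \<le> n" for a b c
  proof -
    define i j k where "i = a - 1" and "j = b - 1" and "k = c - 1"
    then have ijk: "a = Suc i" "b = Suc j" "c = Suc k" "i < j" "j < k" "k < n"
      using that by auto
    show ?thesis
    proof (cases "scheme_1N3 (a - 1) (b - 1) (c - 1)")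
      case True
      then have "\<not> (prefers (map Suc L) b a \<and> prefers (map Suc L) c a)"
        using admissible_order_scheme(1)[OF assms ijk(4-6)] ijk(1-3) by (simp add: prefers_map_Suc)
      then show ?thesis
        using True pos_in_triple_eq_3_iff[OF distinct, of a b c a b c] ijk
        by (simp add: never_cond_def)
    next
      case False
      then have "prefers (map Suc L) a c \<or> prefers (map Suc L) b c"
        using admissible_order_scheme(2)[OF assms ijk(4-6)] ijk(1-3) by (simp add: prefers_map_Suc)
      moreover have "{a, b, c} = {c, a, b}" by auto
      ultimately show ?thesis
        using False pos_in_triple_eq_1_iff[OF distinct, of a b c c a b]
        by (simp add: never_cond_def)
    qed
  qed
  ultimately show ?thesis unfolding scheme_domain_def by blast
qed

section \<open>An automaton generating admissible prefixes\<close>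

text \<open>Lengths \<open>t\<close> are capped at 6 and only some admissible moves are offered: the automaton
  has to produce many admissible prefixes, not all of them.\<close>

datatype state = Seg nat | Seg_odd nat nat | Seg_even nat nat | Seg_odd_top nat nat

fun placed :: "state \<Rightarrow> nat set" where
  "placed (Seg a) = {x. x < a}"
| "placed (Seg_odd a t) = {x. x < a \<or> (a < x \<and> x < a + 2 * t \<and> odd (x - a))}"
| "placed (Seg_even a t) = {x. x < a \<or> (a < x \<and> x \<le> a + 2 * t \<and> even (x - a))}"
| "placed (Seg_odd_top a t) = {x. x < a \<or> (a < x \<and> x < a + 2 * t \<and> odd (x - a)) \<or> x = a + 2 * t}"

fun wf_state :: "state \<Rightarrow> bool" where
  "wf_state (Seg a) = True"
| "wf_state (Seg_odd a t) = (1 \<le> t \<and> t \<le> 6)"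
| "wf_state (Seg_even a t) = (even a \<and> 1 \<le> t \<and> t \<le> 6)"
| "wf_state (Seg_odd_top a t) = (odd a \<and> 1 \<le> t \<and> t \<le> 6)"

fun least_unplaced :: "state \<Rightarrow> nat" where
  "least_unplaced (Seg a) = a"
| "least_unplaced (Seg_odd a t) = a"
| "least_unplaced (Seg_even a t) = a"
| "least_unplaced (Seg_odd_top a t) = a"

fun moves :: "state \<Rightarrow> (nat \<times> state) list" where
  "moves (Seg a) =
     [(a, Seg (a + 1)), (a + 1, Seg_odd a 1)] @ (if even a then [(a + 2, Seg_even a 1)] else [])"
| "moves (Seg_odd a t) =
     [(a, if t = 1 then Seg (a + 2) else Seg_odd (a + 2) (t - 1))]
     @ (if t < 6 then [(a + 2 * t + 1, Seg_odd a (t + 1))] else [])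
     @ (if odd a then [(a + 2 * t, Seg_odd_top a t)] else [])"
| "moves (Seg_even a t) =
     [(a, Seg_odd (a + 1) t)] @ (if t < 6 then [(a + 2 * t + 2, Seg_even a (t + 1))] else [])"
| "moves (Seg_odd_top a t) = [(a, if t = 1 then Seg (a + 3) else Seg_odd_top (a + 2) (t - 1))]"

lemma admissible_after_Seg:
  assumes "e = a \<or> e = a + 1 \<or> (even a \<and> e = a + 2)"
  shows "admissible_after (placed (Seg a)) e"
  using assms unfolding admissible_after_def scheme_1N3_def by (elim disjE conjE; simp; presburger?)

lemma admissible_after_Seg_odd:
  assumes "e = a \<or> e = a + 2 * t + 1 \<or> (odd a \<and> e = a + 2 * t)"
  shows "admissible_after (placed (Seg_odd a t)) e"
  using assms unfolding admissible_after_def scheme_1N3_def by (elim disjE conjE; simp; presburger?)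

lemma admissible_after_Seg_even:
  assumes "even a" and "e = a \<or> e = a + 2 * t + 2"
  shows "admissible_after (placed (Seg_even a t)) e"
  using assms unfolding admissible_after_def scheme_1N3_def by (elim disjE conjE; simp; presburger?)

lemma admissible_after_Seg_odd_top:
  assumes "odd a"
  shows "admissible_after (placed (Seg_odd_top a t)) a"
  using assms unfolding admissible_after_def scheme_1N3_def by (simp; presburger?)

lemma move_admissible:
  assumes "wf_state s" and "(e, s') \<in> set (moves s)"
  shows "admissible_after (placed s) e"
  using assms
  by (cases s) (auto split: if_splits simp del: placed.simps
      intro!: admissible_after_Seg admissible_after_Seg_odd admissible_after_Seg_even
        admissible_after_Seg_odd_top)

lemma move_not_placed: "wf_state s \<Longrightarrow> (e, s') \<in> set (moves s) \<Longrightarrow> e \<notin> placed s"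
  by (cases s) (auto split: if_splits)

lemma placed_move: "wf_state s \<Longrightarrow> (e, s') \<in> set (moves s) \<Longrightarrow> placed s' = insert e (placed s)"
  by (cases s) (auto split: if_splits; presburger)+

lemma wf_state_move: "wf_state s \<Longrightarrow> (e, s') \<in> set (moves s) \<Longrightarrow> wf_state s'"
  by (cases s) (auto split: if_splits)

lemma move_lt_least_unplaced: "wf_state s \<Longrightarrow> (e, s') \<in> set (moves s) \<Longrightarrow> e < least_unplaced s + 14"
  by (cases s) (auto split: if_splits)

lemma below_least_unplaced: "x < least_unplaced s \<Longrightarrow> x \<in> placed s"
  by (cases s) auto

lemma least_unplaced_not_placed: "wf_state s \<Longrightarrow> least_unplaced s \<notin> placed s"
  by (cases s) auto

lemma least_unplaced_move: "\<exists>s'. (least_unplaced s, s') \<in> set (moves s)"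
  by (cases s) auto

lemma finite_placed: "wf_state s \<Longrightarrow> finite (placed s)"
  by (rule finite_subset[of _ "{..< least_unplaced s + 13}"]) (cases s; auto)+

lemma least_unplaced_le_card: "wf_state s \<Longrightarrow> least_unplaced s \<le> card (placed s)"
  using card_mono[OF finite_placed, of s "{..< least_unplaced s}"] below_least_unplaced by auto

lemma card_placed_move:
  "wf_state s \<Longrightarrow> (e, s') \<in> set (moves s) \<Longrightarrow> card (placed s') = Suc (card (placed s))"
  using placed_move move_not_placed finite_placed by simp

lemma filter_upt_least:
  assumes "a < n" "a \<notin> P" "\<forall>x<a. x \<in> P"
  shows "filter (\<lambda>x. x \<notin> P) [0..<n] = a # filter (\<lambda>x. x \<notin> insert a P) [0..<n]"
proof -
  have "[0..<n] = [0..<a] @ a # [Suc a..<n]"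
    using assms(1)
    by (metis upt_add_eq_append upt_conv_Cons zero_le le_add_diff_inverse less_imp_le_nat)
  moreover have "filter (\<lambda>x. x \<notin> P) [Suc a..<n] = filter (\<lambda>x. x \<notin> insert a P) [Suc a..<n]"
    by (rule filter_cong) auto
  ultimately show ?thesis using assms(2,3) by (simp add: filter_empty_conv)
qed

lemma admissible_suffix_ascending:
  assumes "wf_state s" and "placed s \<subseteq> {..<n}"
  shows "admissible_suffix n (placed s) (filter (\<lambda>x. x \<notin> placed s) [0..<n])"
  using assms
proof (induction "card ({..<n} - placed s)" arbitrary: s)
  case 0
  then have "placed s = {..<n}" by auto
  then show ?case by (simp add: filter_empty_conv)
next
  case (Suc m)
  define a where "a = least_unplaced s"
  obtain s' where move: "(a, s') \<in> set (moves s)" using least_unplaced_move a_def by blast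
  have placed': "placed s' = insert a (placed s)" using placed_move[OF Suc.prems(1) move] .
  have "a \<notin> placed s" using least_unplaced_not_placed[OF Suc.prems(1)] a_def by simp
  moreover have "a < n"
  proof (rule ccontr)
    assume "\<not> a < n"
    then have "{..<n} - placed s = {}" using below_least_unplaced a_def by fastforce
    then show False using Suc.hyps(2) by (metis card.empty Zero_not_Suc)
  qed
  moreover have "admissible_suffix n (placed s') (filter (\<lambda>x. x \<notin> placed s') [0..<n])"
  proof (rule Suc.hyps(1))
    show "m = card ({..<n} - placed s')"
      using Suc.hyps(2) placed' \<open>a < n\<close> \<open>a \<notin> placed s\<close> by (simp add: Diff_insert2[symmetric])
    show "wf_state s'" using wf_state_move[OF Suc.prems(1) move] .
    show "placed s' \<subseteq> {..<n}" using Suc.prems(2) placed' \<open>a < n\<close> by auto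
  qed
  moreover have "admissible_after (placed s) a" using move_admissible[OF Suc.prems(1) move] .
  ultimately show ?case
    using filter_upt_least[of a n "placed s"] below_least_unplaced a_def placed' by simp
qed

fun walks :: "nat \<Rightarrow> state \<Rightarrow> nat list set" where
  "walks 0 s = {[]}"
| "walks (Suc l) s = (\<Union>(e, s')\<in>set (moves s). (#) e ` walks l s')"

lemma length_walks: "xs \<in> walks l s \<Longrightarrow> length xs = l"
  by (induction l arbitrary: s xs) auto

lemma finite_walks: "finite (walks l s)"
  by (induction l arbitrary: s) auto

lemma walk_bound:
  "wf_state s \<Longrightarrow> xs \<in> walks l s \<Longrightarrow> set xs \<subseteq> {..< card (placed s) + l + 14}"
proof (induction l arbitrary: s xs)
  case 0
  then show ?case by simp
next
  case (Suc l)
  then obtain e s' ys where move: "(e, s') \<in> set (moves s)" and "ys \<in> walks l s'" "xs = e # ys"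
    by auto
  moreover have "e < card (placed s) + 14"
    using move_lt_least_unplaced[OF Suc.prems(1) move] least_unplaced_le_card[OF Suc.prems(1)]
    by simp
  moreover have "card (placed s') = Suc (card (placed s))"
    using card_placed_move[OF Suc.prems(1) move] .
  ultimately show ?case using Suc.IH[of s' ys] wf_state_move[OF Suc.prems(1) move] by auto
qed

lemma walk_admissible_suffix:
  "wf_state s \<Longrightarrow> xs \<in> walks l s \<Longrightarrow> placed s \<union> set xs \<subseteq> {..<n} \<Longrightarrow>
    admissible_suffix n (placed s) (xs @ filter (\<lambda>x. x \<notin> placed s \<union> set xs) [0..<n])"
proof (induction l arbitrary: s xs)
  case 0
  then show ?case using admissible_suffix_ascending[of s n] by simp
next
  case (Suc l)
  then obtain e s' ys where move: "(e, s') \<in> set (moves s)" and "ys \<in> walks l s'" "xs = e # ys"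
    by auto
  moreover have "placed s \<union> set xs = placed s' \<union> set ys"
    using placed_move[OF Suc.prems(1) move] \<open>xs = e # ys\<close> by auto
  ultimately show ?case
    using Suc.IH[of s' ys] Suc.prems move_not_placed[OF Suc.prems(1) move]
      move_admissible[OF Suc.prems(1) move] wf_state_move[OF Suc.prems(1) move]
      placed_move[OF Suc.prems(1) move]
    by simp
qed

lemma card_walks_Suc:
  assumes "wf_state s"
  shows "card (walks (Suc l) s) = (\<Sum>(e, s')\<leftarrow>moves s. card (walks l s'))"
proof -
  have distinct: "distinct (map fst (moves s))" using assms by (cases s) auto
  then have unique: "s1 = s2" if "(e, s1) \<in> set (moves s)" "(e, s2) \<in> set (moves s)" for e s1 s2
    using that by (metis distinct_map fst_conv inj_onD prod.inject)
  have "card (walks (Suc l) s) = (\<Sum>(e, s')\<in>set (moves s). card ((#) e ` walks l s'))"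
    unfolding walks.simps
    by (subst card_UN_disjoint) (auto simp: finite_walks case_prod_unfold dest: unique)
  also have "\<dots> = (\<Sum>(e, s')\<in>set (moves s). card (walks l s'))"
    by (intro sum.cong refl) (auto simp: card_image)
  also have "\<dots> = (\<Sum>(e, s')\<leftarrow>moves s. card (walks l s'))"
    using distinct by (simp add: sum_list_distinct_conv_sum_set distinct_map)
  finally show ?thesis .
qed

section \<open>Counting walks\<close>

text \<open>Moves commute with shifting \<open>a\<close> by 2, so a weight depending only on the shape, on \<open>t\<close> and
  on the parity of \<open>a\<close> suffices and the step inequality below is a finite check.\<close>

fun weight :: "state \<Rightarrow> real" where
  "weight (Seg a) = (if even a then 2000 else 1786) / 2000"
| "weight (Seg_odd a t) = (if even a then [1271, 805, 504, 308, 176, 80] ! (t - 1)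
     else [1940, 1589, 1155, 773, 467, 220] ! (t - 1)) / 2000"
| "weight (Seg_even a t) = [1356, 1053, 735, 467, 257, 100] ! (t - 1) / 2000"
| "weight (Seg_odd_top a t) = [906, 411, 186, 84, 38, 17] ! (t - 1) / 2000"

lemma wf_stateE:
  assumes "wf_state s"
  obtains a where "s = Seg a"
  | a t where "s = Seg_odd a t" "t \<in> {1, 2, 3, 4, 5, 6}"
  | a t where "s = Seg_even a t" "even a" "t \<in> {1, 2, 3, 4, 5, 6}"
  | a t where "s = Seg_odd_top a t" "odd a" "t \<in> {1, 2, 3, 4, 5, 6}"
proof -
  have "t \<in> {1, 2, 3, 4, 5, 6}" if "1 \<le> t" "t \<le> 6" for t :: nat
    using that by auto
  then show thesis using assms that by (cases s) auto
qed

lemma weight_le_1: "wf_state s \<Longrightarrow> weight s \<le> 1"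
  by (erule wf_stateE) auto

lemma weight_step: "wf_state s \<Longrightarrow> 11 / 5 * weight s \<le> (\<Sum>(e, s')\<leftarrow>moves s. weight s')"
  by (erule wf_stateE) auto

lemma card_walks_lower: "wf_state s \<Longrightarrow> (11 / 5) ^ l * weight s \<le> card (walks l s)"
proof (induction l arbitrary: s)
  case 0
  then show ?case using weight_le_1 by simp
next
  case (Suc l)
  have "(11 / 5) ^ Suc l * weight s \<le> (11 / 5) ^ l * (\<Sum>(e, s')\<leftarrow>moves s. weight s')"
    using weight_step[OF Suc.prems] by simp
  also have "\<dots> = (\<Sum>(e, s')\<leftarrow>moves s. (11 / 5) ^ l * weight s')"
    by (simp add: sum_list_const_mult case_prod_unfold)
  also have "\<dots> \<le> (\<Sum>(e, s')\<leftarrow>moves s. real (card (walks l s')))"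
    using Suc.IH wf_state_move[OF Suc.prems] by (intro sum_list_mono) auto
  also have "\<dots> = real (\<Sum>(e, s')\<leftarrow>moves s. card (walks l s'))"
    by (simp add: sum_list_of_nat[symmetric] case_prod_unfold o_def)
  also have "\<dots> = card (walks (Suc l) s)"
    by (simp only: card_walks_Suc[OF Suc.prems])
  finally show ?case .
qed

lemma card_scheme_domain_lower:
  assumes "l + 14 \<le> n"
  shows "(11 / 5) ^ l \<le> real (card (scheme_domain n))"
proof -
  define completion where "completion xs = xs @ filter (\<lambda>x. x \<notin> set xs) [0..<n]" for xs
  have "map Suc (completion xs) \<in> scheme_domain n" if "xs \<in> walks l (Seg 0)" for xs
  proof -
    have "set xs \<subseteq> {..<n}" using walk_bound[OF _ that] assms by auto
    then have "admissible_suffix n {} (completion xs)"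
      using walk_admissible_suffix[OF _ that, of n] unfolding completion_def by simp
    then show ?thesis by (rule admissible_order_in_scheme_domain)
  qed
  moreover have "inj_on (\<lambda>xs. map Suc (completion xs)) (walks l (Seg 0))"
    by (rule inj_onI) (simp add: completion_def length_walks)
  moreover have "finite (scheme_domain n)"
    using finite_linorders by (rule finite_subset[rotated]) (auto simp: scheme_domain_def)
  ultimately have "card (walks l (Seg 0)) \<le> card (scheme_domain n)"
    by (intro card_inj_on_le) auto
  then show ?thesis using card_walks_lower[of "Seg 0" l] by simp
qed

lemma h_max_lower_bound: "14 \<le> n \<Longrightarrow> (11 / 5) ^ (n - 14) \<le> real (h_max n)"
  using card_scheme_domain_lower[of "n - 14" n] card_scheme_domain_le_h_max[of n] by simp

lemma power_le_shifted_power_eventually: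
  fixes r q :: real
  assumes "0 < r" and "r < q"
  shows "\<exists>N. \<forall>n\<ge>N. r ^ n \<le> q ^ (n - k)"
proof -
  have "1 < q / r" using assms by simp
  then obtain N where N: "q ^ k < (q / r) ^ N" using real_arch_pow by blast
  have "r ^ n \<le> q ^ (n - k)" if "max N k \<le> n" for n
  proof -
    have "(q / r) ^ N \<le> (q / r) ^ n" using \<open>1 < q / r\<close> that by (intro power_increasing) auto
    then have "q ^ k \<le> (q / r) ^ n" using N by linarith
    then have "q ^ k * r ^ n \<le> q ^ n"
      using assms by (simp add: power_divide pos_le_divide_eq)
    also have "q ^ n = q ^ k * q ^ (n - k)" using that by (simp flip: power_add)
    finally show ?thesis using assms by simp
  qed
  then show ?thesis by blast
qed

theorem mainTheorem18:
  shows "(\<exists>C::real > 0. \<exists>N. \<forall>n\<ge>N.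
            real (h_max n) \<le> real (f_max n) \<and>
            C * (sqrt (2 + 2 * sqrt 2)) ^ n \<le> real (h_max n))
       \<and> (\<exists>N. \<forall>n\<ge>N. real (h_max n) > (2.1973::real) ^ n)"
proof -
  define r :: real where "r = 2.1974"
  obtain N where N: "\<forall>n\<ge>N. r ^ n \<le> (11 / 5) ^ (n - 14)"
    using power_le_shifted_power_eventually[of r "11 / 5" 14] unfolding r_def by auto
  have lower: "r ^ n \<le> real (h_max n)" if "max N 14 \<le> n" for n
    using N h_max_lower_bound[of n] that by (meson max.boundedE order_trans)
  have "sqrt 2 \<le> 1.41422" by (rule real_le_lsqrt) (auto simp: power2_eq_square)
  then have "sqrt (2 + 2 * sqrt 2) \<le> r"
    unfolding r_def by (intro real_le_lsqrt) (auto simp: power2_eq_square)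
  then have "sqrt (2 + 2 * sqrt 2) ^ n \<le> real (h_max n)" if "max N 14 \<le> n" for n
    using power_mono[of "sqrt (2 + 2 * sqrt 2)" r n] lower[OF that] by simp
  moreover have "2.1973 ^ n < real (h_max n)" if "max N 14 \<le> n" for n
    using lower[OF that] that power_strict_mono[of "2.1973" r n] unfolding r_def by simp
  ultimately show ?thesis using h_max_le_f_max by (metis mult_1 of_nat_le_iff zero_less_one)
qed

end
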